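(* Consider the stochastic MPC scheme described in the context, i.e. the system $x(k+1)=Ax(k)+Bu(k)+w(k)$ controlled by $u(k)=Ke_0(k)+v_0^*(k)$, where $v^*(k)$ is an optimal solution of problem $(\mathcal{P}_k)$ and the nominal state is updated by $z_0(k)=z_1(k-1)$ with $z_0(0)=z(0)=x(0)$. Suppose the terminal set $\mathcal{Z}_f$ satisfies the terminal invariance assumption stated in the context. If problem $(\mathcal{P}_0)$ is feasible for $x(0)=z(0)$, then the problem is recursively feasible, i.e. $(\mathcal{P}_k)$ is feasible for all times $0\le k\le \bar N-N$.
   Context: System: $x(k+1)=Ax(k)+Bu(k)+w(k)$ with $x(k)\in\mathbb{R}^{n_x}$, $u(k)\in\mathbb{R}^{n_u}$, over a finite horizon $\bar N$; the disturbance sequence $W=[w(0)^\top,\dots,w(\bar N)^\top]^\top$ is a random vector with distribution $\mathcal{D}^W$ (not necessarily i.i.d. or zero mean), with known first two moments. $\mathcal{X}\subseteq\mathbb{R}^{n_x}$, $\mathcal{U}\subseteq\mathbb{R}^{n_u}$ are convex sets, $p_x,p_u\in[0,1]$ probability levels. For sets, $\mathcal{A}\ominus\mathcal{B}=\{a\in\mathcal{A}: a+b\in\mathcal{A}\ \forall b\in\mathcal{B}\}$ (Pontryagin difference). A fixed gain $K\in\mathbb{R}^{n_u\times n_x}$ is given. Let $e$ denote the process $e(k+1)=(A+BK)e(k)+w(k)$. For each $0\le k\le\bar N$, $\mathcal{R}^x_k$ is a set with $\Pr(e(k)\in\mathcal{R}^x_k\mid e(0)=0)\ge p_x$ and $\mathcal{R}^u_k$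 a set with $\Pr(Ke(k)\in\mathcal{R}^u_k\mid Ke(0)=0)\ge p_u$ (probabilistic $k$-step reachable sets). A set $\mathcal{R}_f$ satisfies $\mathcal{R}_f\supseteq\bigcup_{k=0}^{\bar N}\mathcal{R}^x_k$ and $K\mathcal{R}_f\supseteq\bigcup_{k=0}^{\bar N}\mathcal{R}^u_k$. Terminal invariance assumption: $\mathcal{Z}_f\subseteq\mathcal{X}\ominus\mathcal{R}_f$, $(A+BK)z\in\mathcal{Z}_f$ for all $z\in\mathcal{Z}_f$, and $K\mathcal{Z}_f\subseteq\mathcal{U}\ominus K\mathcal{R}_f$. Prediction horizon $N\le\bar N$; stage costs $l_k$ and terminal cost $l_f$ are given. Problem $(\mathcal{P}_k)$ at time $k$: minimize over $v_0,\dots,v_{N-1}$ the cost $\mathbb{E}_{W_k}\big(l_f(x_N)+\sum_{i=0}^{N-1}l_{k+i}(x_i,u_i)\big)$ subject to $x_{i}=z_{i}+e_{i}$, $u_i=Ke_i+v_i$, $z_{i+1}=Az_i+Bv_i$, $e_{i+1}=(A+BK)e_i+w_i$, where $W_k=[w_0^\top,\dots,w_N^\top]^\top$ is distributed according to the conditional distribution of $[w(k)^\top,\dots,w(k+N)^\top]^\top$ given the realized $[w(0)^\top,\dots,w(k-1)^\top]^\top$; constraints $z_i\in\mathcal{X}\ominus\mathcal{R}^x_{i+k}$, $v_i\in\mathcal{U}\ominus\mathcal{R}^u_{i+k}$ for $i=0,\dots,N-1$, and $z_N\in\mathcal{Z}_f$; initialization $x_0=x(k)$, $z_0=z_1(k-1)$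 (the value of $z_1$ predicted at time $k-1$; $z_0(0)=x(0)$), $e_0=x_0-z_0$. The closed-loop nominal state is $z(k)=z_0(k)$ and closed-loop error $e(k)=x(k)-z(k)$; the applied input is $u(k)=Ke_0(k)+v_0^*(k)$ with $v^*(k)$ optimal for $(\mathcal{P}_k)$. *)

theory Defs
  imports "HOL-Probability.Probability"
begin

text \<open>Pontryagin difference, literally as defined in the paper:
  A minus B = {a in A. a + b in A for all b in B}.\<close>
definition pdiff :: "'a::plus set \<Rightarrow> 'a set \<Rightarrow> 'a set" (infixl "\<ominus>\<^sub>P" 65) where
  "A \<ominus>\<^sub>P B = {a \<in> A. \<forall>b \<in> B. a + b \<in> A}"

primrec zpred :: "real^'n^'n \<Rightarrow> real^'m^'n \<Rightarrow> real^'n \<Rightarrow> (nat \<Rightarrow> real^'m) \<Rightarrow> nat \<Rightarrow> real^'n" where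
  "zpred A B z0 v 0 = z0"
| "zpred A B z0 v (Suc i) = A *v zpred A B z0 v i + B *v v i"

text \<open>Feasibility of the decision variables v_0..v_{N-1} for problem (P_k) with initial nominal
  state z0 (the constraints of (P_k) only involve the nominal part).\<close>
definition feasible_input ::
  "real^'n^'n \<Rightarrow> real^'m^'n \<Rightarrow> (real^'n) set \<Rightarrow> (real^'m) set \<Rightarrow> (nat \<Rightarrow> (real^'n) set)
   \<Rightarrow> (nat \<Rightarrow> (real^'m) set) \<Rightarrow> (real^'n) set \<Rightarrow> nat \<Rightarrow> nat \<Rightarrow> real^'n \<Rightarrow> (nat \<Rightarrow> real^'m) \<Rightarrow> bool"
  where
  "feasible_input A B X U Rx Ru Zf N k z0 v \<longleftrightarrow>
     (\<forall>i<N. zpred A B z0 v i \<in> X \<ominus>\<^sub>P Rx (i + k) \<and> v i \<in> U \<ominus>\<^sub>P Ru (i + k))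
     \<and> zpred A B z0 v N \<in> Zf"

primrec eproc :: "real^'n^'n \<Rightarrow> real^'m^'n \<Rightarrow> real^'n^'m \<Rightarrow> (nat \<Rightarrow> 'w \<Rightarrow> real^'n) \<Rightarrow> nat \<Rightarrow> 'w \<Rightarrow> real^'n" where
  "eproc A B K w 0 \<omega> = 0"
| "eproc A B K w (Suc k) \<omega> = (A + B ** K) *v eproc A B K w k \<omega> + w k \<omega>"

end

theory Submission
  imports Defs
begin

text \<open>Recursive feasibility follows from the classical shifted candidate: drop the first input of
  the solution of (P_k) and append the terminal feedback K z_N. The shifted nominal trajectory
  inherits the stage constraints of (P_k), since the tightening at stage i of (P_(k+1)) is the one
  at stage i+1 of (P_k). Its new last stage lies in the terminal set, whose tightening by R_f
  dominates the tightening by the reachable sets, and invariance of the terminal set under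
  A + BK keeps the new endpoint inside it.\<close>

lemma pdiff_antimono: "B \<subseteq> C \<Longrightarrow> A \<ominus>\<^sub>P C \<subseteq> A \<ominus>\<^sub>P B"
  unfolding pdiff_def by blast

lemma zpred_shift:
  assumes "\<And>j. j < i \<Longrightarrow> v' j = v (Suc j)"
  shows "zpred A B (zpred A B z0 v 1) v' i = zpred A B z0 v (Suc i)"
  using assms by (induction i) auto

definition shifted_input :: "real^'n^'m \<Rightarrow> nat \<Rightarrow> (nat \<Rightarrow> real^'m) \<Rightarrow> real^'n \<Rightarrow> nat \<Rightarrow> real^'m"
  where "shifted_input K N v zN j = (if j < N - 1 then v (Suc j) else K *v zN)"

lemma zpred_shifted_input:
  assumes "i < N"
  shows "zpred A B (zpred A B z0 v 1) (shifted_input K N v zN) i = zpred A B z0 v (Suc i)"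
  using assms by (intro zpred_shift) (auto simp: shifted_input_def)

lemma zpred_shifted_input_terminal:
  assumes "0 < N"
  shows "zpred A B (zpred A B z0 v 1) (shifted_input K N v (zpred A B z0 v N)) N
    = (A + B ** K) *v zpred A B z0 v N"
proof -
  obtain n where N: "N = Suc n" using assms by (cases N) auto
  let ?zN = "zpred A B z0 v N"
  have "zpred A B (zpred A B z0 v 1) (shifted_input K N v ?zN) n = ?zN"
    using zpred_shifted_input[of n N, where zN = ?zN] by (simp add: N)
  then have "zpred A B (zpred A B z0 v 1) (shifted_input K N v ?zN) N
      = A *v ?zN + B *v (K *v ?zN)"
    by (simp only: N zpred.simps(2)) (simp add: shifted_input_def)
  also have "\<dots> = (A + B ** K) *v ?zN"
    by (simp add: matrix_vector_mult_add_rdistrib matrix_vector_mul_assoc)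
  finally show ?thesis .
qed

lemma feasible_input_shifted:
  fixes A :: "real^'n^'n" and B :: "real^'m^'n" and K :: "real^'n^'m"
  assumes feasible: "feasible_input A B X U Rx Ru Zf N k z0 v"
    and "0 < N"
    and Zf_X: "Zf \<subseteq> X \<ominus>\<^sub>P Rx (N + k)"
    and Zf_U: "(\<lambda>zz. K *v zz) ` Zf \<subseteq> U \<ominus>\<^sub>P Ru (N + k)"
    and Zf_inv: "\<And>zz. zz \<in> Zf \<Longrightarrow> (A + B ** K) *v zz \<in> Zf"
  shows "feasible_input A B X U Rx Ru Zf N (Suc k) (zpred A B z0 v 1)
    (shifted_input K N v (zpred A B z0 v N))"
  unfolding feasible_input_def
proof (intro conjI allI impI)
  let ?zN = "zpred A B z0 v N"
  have stage: "\<And>i. i < N \<Longrightarrow> zpred A B z0 v i \<in> X \<ominus>\<^sub>P Rx (i + k) \<and> v i \<in> U \<ominus>\<^sub>P Ru (i + k)"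
    and zN: "?zN \<in> Zf"
    using feasible unfolding feasible_input_def by auto
  fix i assume i: "i < N"
  show "zpred A B (zpred A B z0 v 1) (shifted_input K N v ?zN) i \<in> X \<ominus>\<^sub>P Rx (i + Suc k)"
  proof (cases "Suc i < N")
    case True
    then show ?thesis using stage[of "Suc i"] by (simp only: zpred_shifted_input[OF i]) simp
  next
    case False
    then have "Suc i = N" using i by simp
    then show ?thesis using zN Zf_X by (simp only: zpred_shifted_input[OF i]) auto
  qed
  show "shifted_input K N v ?zN i \<in> U \<ominus>\<^sub>P Ru (i + Suc k)"
  proof (cases "Suc i < N")
    case True
    then show ?thesis using stage[of "Suc i"] by (auto simp: shifted_input_def)
  next
    case False
    then have "Suc i = N" using i by simp
    then show ?thesis using zN Zf_U by (auto simp: shifted_input_def)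
  qed
next
  show "zpred A B (zpred A B z0 v 1) (shifted_input K N v (zpred A B z0 v N)) N \<in> Zf"
    using feasible Zf_inv unfolding feasible_input_def
    by (simp only: zpred_shifted_input_terminal[OF \<open>0 < N\<close>])
qed

theorem theorem1:
  fixes A :: "real^'n^'n" and B :: "real^'m^'n" and K :: "real^'n^'m"
    and X :: "(real^'n) set" and U :: "(real^'m) set"
    and px pu :: real and N Nbar :: nat
    and M :: "'w measure" and w :: "nat \<Rightarrow> 'w \<Rightarrow> real^'n" and \<omega>0 :: 'w
    and Rx :: "nat \<Rightarrow> (real^'n) set" and Ru :: "nat \<Rightarrow> (real^'m) set"
    and Rf Zf :: "(real^'n) set"
    and J :: "nat \<Rightarrow> real^'n \<Rightarrow> real^'n \<Rightarrow> (nat \<Rightarrow> real^'m) \<Rightarrow> real"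
    and x z :: "nat \<Rightarrow> real^'n" and V :: "nat \<Rightarrow> nat \<Rightarrow> real^'m"
  assumes convX: "convex X" and convU: "convex U"
    and px: "0 \<le> px" "px \<le> 1" and pu: "0 \<le> pu" "pu \<le> 1"
    and horizon: "0 < N" "N \<le> Nbar"
    and M: "prob_space M"
    and w_meas: "\<And>j. w j \<in> borel_measurable M"
    and w_moments: "\<And>j. j \<le> Nbar \<Longrightarrow> integrable M (\<lambda>\<omega>. (norm (w j \<omega>))\<^sup>2)"
    and \<omega>0: "\<omega>0 \<in> space M"
    and Rx_prob: "\<And>k. k \<le> Nbar \<Longrightarrow>
        measure M {\<omega> \<in> space M. eproc A B K w k \<omega> \<in> Rx k} \<ge> px"
    and Ru_prob: "\<And>k. k \<le> Nbar \<Longrightarrow>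
        measure M {\<omega> \<in> space M. K *v eproc A B K w k \<omega> \<in> Ru k} \<ge> pu"
    and Rf_x: "(\<Union>k\<in>{0..Nbar}. Rx k) \<subseteq> Rf"
    and Rf_u: "(\<Union>k\<in>{0..Nbar}. Ru k) \<subseteq> (\<lambda>e. K *v e) ` Rf"
    and Zf_X: "Zf \<subseteq> X \<ominus>\<^sub>P Rf"
    and Zf_inv: "\<And>zz. zz \<in> Zf \<Longrightarrow> (A + B ** K) *v zz \<in> Zf"
    and Zf_U: "(\<lambda>zz. K *v zz) ` Zf \<subseteq> U \<ominus>\<^sub>P ((\<lambda>e. K *v e) ` Rf)"
    \<comment> \<open>closed loop: initialization z(0) = x(0)\<close>
    and z0: "z 0 = x 0"
    \<comment> \<open>nominal update z_0(k+1) = z_1(k)\<close>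
    and z_step: "\<And>k. z (Suc k) = zpred A B (z k) (V k) 1"
    \<comment> \<open>true system with applied input u(k) = K e_0(k) + v*_0(k), realized disturbance\<close>
    and x_step: "\<And>k. x (Suc k) = A *v x k + B *v (K *v (x k - z k) + V k 0) + w k \<omega>0"
    \<comment> \<open>V k is an optimal solution of (P_k) whenever (P_k) is feasible\<close>
    and V_opt: "\<And>k. k \<le> Nbar - N \<Longrightarrow>
        (\<exists>v. feasible_input A B X U Rx Ru Zf N k (z k) v) \<Longrightarrow>
        feasible_input A B X U Rx Ru Zf N k (z k) (V k) \<and>
        (\<forall>v. feasible_input A B X U Rx Ru Zf N k (z k) v \<longrightarrow> J k (x k) (z k) (V k) \<le> J k (x k) (z k) v)"
    and P0_feasible: "\<exists>v. feasible_input A B X U Rx Ru Zf N 0 (x 0) v"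
  shows "\<forall>k. k \<le> Nbar - N \<longrightarrow> (\<exists>v. feasible_input A B X U Rx Ru Zf N k (z k) v)"
proof (intro allI impI)
  fix k assume "k \<le> Nbar - N"
  then show "\<exists>v. feasible_input A B X U Rx Ru Zf N k (z k) v"
  proof (induction k)
    case 0
    then show ?case using P0_feasible z0 by simp
  next
    case (Suc k)
    then have feasible: "feasible_input A B X U Rx Ru Zf N k (z k) (V k)"
      using V_opt by simp
    have "N + k \<in> {0..Nbar}"
      using Suc.prems horizon by simp
    then have Zf_X': "Zf \<subseteq> X \<ominus>\<^sub>P Rx (N + k)"
      and Zf_U': "(\<lambda>zz. K *v zz) ` Zf \<subseteq> U \<ominus>\<^sub>P Ru (N + k)"
      using Zf_X Zf_U pdiff_antimono[of "Rx (N + k)" Rf X] pdiff_antimono[of "Ru (N + k)" _ U]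
        Rf_x Rf_u by blast+
    show ?case
      using feasible_input_shifted[OF feasible horizon(1) Zf_X' Zf_U' Zf_inv] z_step by metis
  qed
qed

end
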